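(* Let $m\in\mathbb{N}$ with $m\ge1$. (a) If $m$ is odd, then $F_m$ is $\mathbb{Z}_m$-cordial. Moreover, $F_n$ is $\mathbb{Z}_m$-cordial for all $n\in\mathbb{N}$ if and only if $F_1,F_2,\ldots,F_{m-1}$ are $\mathbb{Z}_m$-cordial. (b) If $m$ is even, then $F_{2m}$ is $\mathbb{Z}_m$-cordial. Moreover, $F_n$ is $\mathbb{Z}_m$-cordial for all $n\in\mathbb{N}$ if and only if $F_1,F_2,\ldots,F_{2m-1}$ are $\mathbb{Z}_m$-cordial. (c) If $m$ is even but $4\nmid m$, then $F_m$ is not $\mathbb{Z}_m$-cordial.
   Context: $\mathbb{N}=\mathbb{Z}_{\ge0}$. Graphs are finite, simple and undirected. For $n\in\mathbb{N}$, the friendship graph $F_n$ is the union of $n$ copies of the triangle $C_3$ joined at a single common (central) vertex. For an abelian group $A$ and a graph $G=(V,E)$, a vertex labeling $\ell:V\to A$ induces an edge labeling $\ell(\{v_1,v_2\})=\ell(v_1)+\ell(v_2)$. Let $f_V(a)=|\{v\in V:\ell(v)=a\}|$ and $f_E(a)=|\{e\in E:\ell(e)=a\}|$. The labeling is $A$-cordial if $|f_V(a_1)-f_V(a_2)|\le 1$ and $|f_E(a_1)-f_E(a_2)|\le 1$ for all $a_1,a_2\in A$; $G$ is $A$-cordial if it admits an $A$-cordial labeling. *)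

theory Defs
  imports Main
begin

text \<open>A finite simple graph is given by a vertex set V and a set E of 2-element
  subsets of V. The group Z_m is represented by the residues {0..<m} with addition mod m.\<close>

definition vcount :: "nat set \<Rightarrow> (nat \<Rightarrow> nat) \<Rightarrow> nat \<Rightarrow> nat" where
  "vcount V l a = card {v \<in> V. l v = a}"

definition edge_label :: "nat \<Rightarrow> (nat \<Rightarrow> nat) \<Rightarrow> nat set \<Rightarrow> nat" where
  "edge_label m l e = (\<Sum>v\<in>e. l v) mod m"

definition ecount :: "nat \<Rightarrow> nat set set \<Rightarrow> (nat \<Rightarrow> nat) \<Rightarrow> nat \<Rightarrow> nat" where
  "ecount m E l a = card {e \<in> E. edge_label m l e = a}"

definition Zm_cordial_labeling :: "nat \<Rightarrow> nat set \<Rightarrow> nat set set \<Rightarrow> (nat \<Rightarrow> nat) \<Rightarrow> bool" where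
  "Zm_cordial_labeling m V E l \<longleftrightarrow>
     (\<forall>v\<in>V. l v < m) \<and>
     (\<forall>a1<m. \<forall>a2<m. \<bar>int (vcount V l a1) - int (vcount V l a2)\<bar> \<le> 1) \<and>
     (\<forall>a1<m. \<forall>a2<m. \<bar>int (ecount m E l a1) - int (ecount m E l a2)\<bar> \<le> 1)"

definition Zm_cordial :: "nat \<Rightarrow> nat set \<Rightarrow> nat set set \<Rightarrow> bool" where
  "Zm_cordial m V E \<longleftrightarrow> (\<exists>l. Zm_cordial_labeling m V E l)"

text \<open>Friendship graph F_n: centre 0, triangles {0, 2k-1, 2k} for k = 1..n.\<close>

definition friendship_V :: "nat \<Rightarrow> nat set" where
  "friendship_V n = {0..2*n}"

definition friendship_E :: "nat \<Rightarrow> nat set set" where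
  "friendship_E n = {{0, i} | i. 1 \<le> i \<and> i \<le> 2*n} \<union> {{2*k - 1, 2*k} | k. 1 \<le> k \<and> k \<le> n}"

definition friendship_Zm_cordial :: "nat \<Rightarrow> nat \<Rightarrow> bool" where
  "friendship_Zm_cordial m n \<longleftrightarrow> Zm_cordial m (friendship_V n) (friendship_E n)"

end

theory Submission
  imports Defs "HOL-Number_Theory.Cong"
begin

text \<open>A cordial labeling of F_n extends to F_(n+p) by p new triangles with
  labels (x k, y k) whenever x, y and x + y each take every residue equally often:
  then, whatever the label c of the centre, every vertex and edge count grows by
  the same amount, because c + x and c + y are again equidistributed. For odd m
  the triangles (k, k), k < m, work since doubling is a bijection of Z_m; for any m
  the 2m triangles (j, j) and (j, j+1) do. Hence cordiality of F_n propagates with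
  period m resp. 2m. For m = 2 mod 4, a cordial labeling of F_m would give every
  residue to exactly three of the 3m edges, so the edge labels sum to the odd
  number 3 m (m - 1)/2; but modulo 2 this sum is the sum of all endpoint labels,
  which is even because each triangle counts each of its vertices twice.\<close>

lemma friendship_E_subset: "e \<in> friendship_E n \<Longrightarrow> e \<subseteq> friendship_V n"
  unfolding friendship_E_def friendship_V_def by auto

lemma finite_friendship_E: "finite (friendship_E n)"
proof (rule finite_subset)
  show "friendship_E n \<subseteq> Pow (friendship_V n)"
    using friendship_E_subset by blast
qed (simp add: friendship_V_def)

lemma friendship_E_0: "friendship_E 0 = {}"
  unfolding friendship_E_def by auto

lemma friendship_E_Suc:
  "friendship_E (Suc n) =
     insert {0, 2*n+1} (insert {0, 2*n+2} (insert {2*n+1, 2*n+2} (friendship_E n)))"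
proof -
  have spokes: "{{0, i} | i. 1 \<le> i \<and> i \<le> 2 * Suc n}
      = insert {0, 2*n+1} (insert {0, 2*n+2} {{0, i} | i. 1 \<le> i \<and> i \<le> 2*n})"
    by (auto simp: le_Suc_eq)
  have rims: "{{2*k - 1, 2*k} | k. 1 \<le> k \<and> k \<le> Suc n}
      = insert {2*n+1, 2*n+2} {{2*k - 1, 2*k} | k. 1 \<le> k \<and> k \<le> n}"
  proof -
    have "{2 * Suc n - 1, 2 * Suc n} = {2*n+1, 2*n+2}"
      by auto
    then show ?thesis
      by (auto simp: le_Suc_eq) (rule exI[of _ "Suc n"], auto)
  qed
  show ?thesis
    unfolding friendship_E_def spokes rims by auto
qed

lemma sum_friendship_E_Suc:
  "(\<Sum>e\<in>friendship_E (Suc n). g e)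
     = (\<Sum>e\<in>friendship_E n. g e) + g {0, 2*n+1} + g {0, 2*n+2} + g {2*n+1, 2*n+2}"
proof -
  have new: "\<not> e \<subseteq> friendship_V n" if "2*n+1 \<in> e \<or> 2*n+2 \<in> e" for e
    using that by (auto simp: friendship_V_def)
  have "{2*n+1, 2*n+2} \<notin> friendship_E n"
    "{0, 2*n+2} \<notin> insert {2*n+1, 2*n+2} (friendship_E n)"
    "{0, 2*n+1} \<notin> insert {0, 2*n+2} (insert {2*n+1, 2*n+2} (friendship_E n))"
    using new friendship_E_subset by (auto simp: doubleton_eq_iff)
  then show ?thesis
    unfolding friendship_E_Suc by (simp add: finite_friendship_E algebra_simps)
qed

lemma sum_friendship_E_add:
  "(\<Sum>e\<in>friendship_E (n + p). g e) = (\<Sum>e\<in>friendship_E n. g e)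
     + (\<Sum>k<p. g {0, 2*n+2*k+1} + g {0, 2*n+2*k+2} + g {2*n+2*k+1, 2*n+2*k+2})"
  by (induction p) (simp_all add: sum_friendship_E_Suc algebra_simps)

lemma sum_friendship_V_add:
  "(\<Sum>v\<in>friendship_V (n + p). f v)
     = (\<Sum>v\<in>friendship_V n. f v) + (\<Sum>k<p. f (2*n+2*k+1) + f (2*n+2*k+2))"
proof (induction p)
  case (Suc p)
  have "friendship_V (n + Suc p) = {0..Suc (Suc (2 * (n + p)))}"
    by (simp add: friendship_V_def)
  with Suc show ?case
    by (simp add: friendship_V_def algebra_simps)
qed simp

lemma card_friendship_E: "card (friendship_E n) = 3 * n"
  using sum_friendship_E_add[where n=0 and p=n and g="\<lambda>_. 1::nat"] by (simp add: friendship_E_0)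

lemma card_filter_eq_sum: "finite A \<Longrightarrow> card {x \<in> A. P x} = (\<Sum>x\<in>A. of_bool (P x))"
  by (simp add: Collect_conj_eq Int_commute)

lemma vcount_eq_sum: "finite V \<Longrightarrow> vcount V l a = (\<Sum>v\<in>V. of_bool (l v = a))"
  unfolding vcount_def by (rule card_filter_eq_sum)

lemma ecount_eq_sum: "finite E \<Longrightarrow> ecount m E l a = (\<Sum>e\<in>E. of_bool (edge_label m l e = a))"
  unfolding ecount_def by (rule card_filter_eq_sum)

lemma bij_betw_affine_mod:
  fixes a c m :: nat
  assumes "coprime a m"
  shows "bij_betw (\<lambda>k. (a * k + c) mod m) {..<m} {..<m}"
proof -
  have inj: "inj_on (\<lambda>k. (a * k + c) mod m) {..<m}"
  proof (rule inj_onI)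
    fix x y assume "x \<in> {..<m}" "y \<in> {..<m}" "(a * x + c) mod m = (a * y + c) mod m"
    then show "x = y"
      using assms cong_less_modulus_unique_nat[of x y m]
      by (simp add: cong_add_rcancel_nat cong_mult_lcancel_nat flip: cong_def)
  qed
  moreover have "(\<lambda>k. (a * k + c) mod m) ` {..<m} \<subseteq> {..<m}"
    by auto
  ultimately show ?thesis
    by (simp add: bij_betw_def endo_inj_surj)
qed

definition equidistributed :: "nat \<Rightarrow> nat \<Rightarrow> (nat \<Rightarrow> nat) \<Rightarrow> nat \<Rightarrow> bool" where
  "equidistributed m p f r \<longleftrightarrow>
     (\<forall>k<p. f k < m) \<and> (\<forall>a<m. card {k \<in> {..<p}. f k = a} = r)"

lemma equidistributed_id: "equidistributed m m (\<lambda>k. k) 1"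
proof -
  have "{k \<in> {..<m}. k = a} = {a}" if "a < m" for a
    using that by auto
  then show ?thesis
    by (simp add: equidistributed_def)
qed

lemma equidistributed_comp_bij:
  assumes f: "equidistributed m p f r" and \<sigma>: "bij_betw \<sigma> {..<p} {..<p}"
  shows "equidistributed m p (\<lambda>k. f (\<sigma> k)) r"
proof -
  have "bij_betw \<sigma> {k \<in> {..<p}. f (\<sigma> k) = a} {j \<in> {..<p}. f j = a}" for a
    using \<sigma> by (auto simp: bij_betw_def inj_on_def image_iff)
  then have "card {k \<in> {..<p}. f (\<sigma> k) = a} = card {j \<in> {..<p}. f j = a}" for a
    by (rule bij_betw_same_card)
  moreover have "\<sigma> k < p" if "k < p" for k
    using \<sigma> that by (auto dest: bij_betwE)
  ultimately show ?thesis
    using f by (simp add: equidistributed_def)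
qed

lemma equidistributed_add_mod:
  assumes f: "equidistributed m p f r"
  shows "equidistributed m p (\<lambda>k. (c + f k) mod m) r"
  unfolding equidistributed_def
proof (intro conjI allI impI)
  fix a assume "a < m"
  have bij: "bij_betw (\<lambda>b. (1 * b + c) mod m) {..<m} {..<m}"
    by (rule bij_betw_affine_mod) simp
  with \<open>a < m\<close> have "a \<in> (\<lambda>b. (1 * b + c) mod m) ` {..<m}"
    by (simp add: bij_betw_def)
  then obtain b where b: "b < m" "(c + b) mod m = a"
    by (auto simp: add.commute)
  have "(c + f k) mod m = a \<longleftrightarrow> f k = b" if "k < p" for k
  proof -
    have "f k < m"
      using f that by (simp add: equidistributed_def)
    then show ?thesis
      using bij b inj_onD[of "\<lambda>b. (b + c) mod m" "{..<m}" "f k" b]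
      by (auto simp: bij_betw_def add.commute)
  qed
  then have "{k \<in> {..<p}. (c + f k) mod m = a} = {k \<in> {..<p}. f k = b}"
    by auto
  then show "card {k \<in> {..<p}. (c + f k) mod m = a} = r"
    using f b by (simp add: equidistributed_def)
next
  fix k assume "k < p"
  with f have "0 < m"
    by (auto simp: equidistributed_def)
  then show "(c + f k) mod m < m"
    by simp
qed

lemma equidistributed_cong:
  assumes "\<And>k. k < p \<Longrightarrow> f k = g k"
  shows "equidistributed m p f r \<longleftrightarrow> equidistributed m p g r"
proof -
  have "{k \<in> {..<p}. f k = a} = {k \<in> {..<p}. g k = a}" for a
    using assms by auto
  with assms show ?thesis
    by (simp add: equidistributed_def)
qed

lemma equidistributed_mod: "equidistributed m (2*m) (\<lambda>k. k mod m) 2"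
proof -
  have "k mod m = a \<longleftrightarrow> k = a \<or> k = a + m" if "k < 2*m" "a < m" for k a
    using that by (cases "k < m") (auto simp: le_mod_geq)
  then have "{k \<in> {..<2*m}. k mod m = a} = {a, a + m}" if "a < m" for a
    using that by auto
  then show ?thesis
    by (auto simp: equidistributed_def)
qed

lemma equidistributed_div_2: "equidistributed m (2*m) (\<lambda>k. k div 2) 2"
proof -
  have "{k \<in> {..<2*m}. k div 2 = a} = {2*a, 2*a + 1}" if "a < m" for a
    using that by auto
  then show ?thesis
    by (auto simp: equidistributed_def)
qed

text \<open>Triangle k < p is placed on the vertices 2n+2k+1 and 2n+2k+2 with labels x k and y k.\<close>

definition append_triangles ::
    "nat \<Rightarrow> (nat \<Rightarrow> nat) \<Rightarrow> (nat \<Rightarrow> nat) \<Rightarrow> (nat \<Rightarrow> nat) \<Rightarrow> nat \<Rightarrow> nat" where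
  "append_triangles n l x y v =
     (if v \<le> 2*n then l v
      else if odd v then x ((v - 2*n - 1) div 2) else y ((v - 2*n - 1) div 2))"

lemma append_triangles_old: "v \<le> 2*n \<Longrightarrow> append_triangles n l x y v = l v"
  by (simp add: append_triangles_def)

lemma append_triangles_first [simp]: "append_triangles n l x y (Suc (2*n + 2*k)) = x k"
  by (simp add: append_triangles_def)

lemma append_triangles_second [simp]: "append_triangles n l x y (Suc (Suc (2*n + 2*k))) = y k"
proof -
  have "(Suc (Suc (2*n + 2*k)) - 2*n - 1) div 2 = k"
    by simp
  then show ?thesis
    by (simp add: append_triangles_def)
qed

lemma vcount_append_triangles:
  "vcount (friendship_V (n + p)) (append_triangles n l x y) a
     = vcount (friendship_V n) l a + card {k \<in> {..<p}. x k = a} + card {k \<in> {..<p}. y k = a}"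
proof -
  have fin: "finite (friendship_V n)" for n
    by (simp add: friendship_V_def)
  have "(\<Sum>v\<in>friendship_V n. of_bool (append_triangles n l x y v = a))
      = (\<Sum>v\<in>friendship_V n. of_bool (l v = a) :: nat)"
    by (intro sum.cong) (auto simp: friendship_V_def append_triangles_old)
  then show ?thesis
    unfolding vcount_eq_sum[OF fin] sum_friendship_V_add card_filter_eq_sum[OF finite_lessThan]
    by (simp add: sum.distrib)
qed

lemma ecount_append_triangles:
  "ecount m (friendship_E (n + p)) (append_triangles n l x y) a
     = ecount m (friendship_E n) l a + card {k \<in> {..<p}. (l 0 + x k) mod m = a}
       + card {k \<in> {..<p}. (l 0 + y k) mod m = a} + card {k \<in> {..<p}. (x k + y k) mod m = a}"
proof -
  have "edge_label m (append_triangles n l x y) e = edge_label m l e" if "e \<in> friendship_E n" for e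
    using friendship_E_subset[OF that]
    unfolding edge_label_def friendship_V_def
    by (intro arg_cong[where f="\<lambda>t. t mod m"] sum.cong) (auto simp: append_triangles_old)
  then have "(\<Sum>e\<in>friendship_E n. of_bool (edge_label m (append_triangles n l x y) e = a))
      = (\<Sum>e\<in>friendship_E n. of_bool (edge_label m l e = a) :: nat)"
    by (intro sum.cong) auto
  moreover have "append_triangles n l x y 0 = l 0"
    by (simp add: append_triangles_old)
  ultimately show ?thesis
    unfolding ecount_eq_sum[OF finite_friendship_E] sum_friendship_E_add
      card_filter_eq_sum[OF finite_lessThan]
    by (simp add: sum.distrib edge_label_def)
qed

lemma friendship_Zm_cordial_append_triangles:
  assumes "friendship_Zm_cordial m n"
    and x: "equidistributed m p x r" and y: "equidistributed m p y r'"
    and xy: "equidistributed m p (\<lambda>k. (x k + y k) mod m) t"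
  shows "friendship_Zm_cordial m (n + p)"
proof -
  obtain l where l: "Zm_cordial_labeling m (friendship_V n) (friendship_E n) l"
    using assms(1) by (auto simp: friendship_Zm_cordial_def Zm_cordial_def)
  let ?l = "append_triangles n l x y"
  have "vcount (friendship_V (n + p)) ?l a = vcount (friendship_V n) l a + (r + r')" if "a < m" for a
    using x y that by (simp add: vcount_append_triangles equidistributed_def)
  moreover have "ecount m (friendship_E (n + p)) ?l a = ecount m (friendship_E n) l a + (r + r' + t)"
    if "a < m" for a
    using equidistributed_add_mod[OF x, of "l 0"] equidistributed_add_mod[OF y, of "l 0"] xy that
    by (simp add: ecount_append_triangles equidistributed_def)
  moreover have "?l v < m" if "v \<in> friendship_V (n + p)" for v
  proof (cases "v \<le> 2*n")
    case True
    with l show ?thesis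
      by (auto simp: Zm_cordial_labeling_def friendship_V_def append_triangles_old)
  next
    case False
    with that have "(v - 2*n - 1) div 2 < p"
      by (auto simp: friendship_V_def)
    with False x y show ?thesis
      by (simp add: append_triangles_def equidistributed_def)
  qed
  ultimately have "Zm_cordial_labeling m (friendship_V (n + p)) (friendship_E (n + p)) ?l"
    using l by (simp add: Zm_cordial_labeling_def)
  then show ?thesis
    by (auto simp: friendship_Zm_cordial_def Zm_cordial_def)
qed

lemma friendship_Zm_cordial_0: "m \<ge> 1 \<Longrightarrow> friendship_Zm_cordial m 0"
  unfolding friendship_Zm_cordial_def Zm_cordial_def
proof (intro exI[of _ "\<lambda>_. 0"])
  assume "m \<ge> 1"
  have "vcount (friendship_V 0) (\<lambda>_. 0) a = of_bool (a = 0)" for a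
    by (simp add: vcount_def friendship_V_def)
  with \<open>m \<ge> 1\<close> show "Zm_cordial_labeling m (friendship_V 0) (friendship_E 0) (\<lambda>_. 0)"
    by (simp add: Zm_cordial_labeling_def ecount_def friendship_E_0 friendship_V_def)
qed

lemma friendship_Zm_cordial_add_odd:
  assumes "odd m" "friendship_Zm_cordial m n"
  shows "friendship_Zm_cordial m (n + m)"
proof (rule friendship_Zm_cordial_append_triangles[OF assms(2) equidistributed_id equidistributed_id])
  have "bij_betw (\<lambda>k. (2 * k + 0) mod m) {..<m} {..<m}"
    using assms(1) by (intro bij_betw_affine_mod) simp
  from equidistributed_comp_bij[OF equidistributed_id this]
  show "equidistributed m m (\<lambda>k. (k + k) mod m) 1"
    by (simp add: mult_2)
qed

lemma friendship_Zm_cordial_add_double: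
  assumes "friendship_Zm_cordial m n"
  shows "friendship_Zm_cordial m (n + 2*m)"
proof -
  \<comment> \<open>Triangle 2j gets the labels (j, j) and triangle 2j+1 the labels (j, j+1 mod m).\<close>
  let ?y = "\<lambda>k. ((k + 1) mod (2*m)) div 2"
  have "bij_betw (\<lambda>k. (1 * k + 1) mod (2*m)) {..<2*m} {..<2*m}"
    by (intro bij_betw_affine_mod) simp
  from equidistributed_comp_bij[OF equidistributed_div_2 this]
  have y: "equidistributed m (2*m) ?y 2"
    by simp
  have "(k div 2 + ?y k) mod m = k mod m" if "k < 2*m" for k
  proof (cases "k + 1 < 2*m")
    case True
    moreover have "k div 2 + (k + 1) div 2 = k"
      by presburger
    ultimately show ?thesis
      by simp
  next
    case False
    with that have "k = 2*m - 1" "m \<ge> 1"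
      by auto
    then have "k div 2 = m - 1" "(k + 1) mod (2*m) = 0" "k = (m - 1) + m"
      by (presburger, simp_all)
    then show ?thesis
      by simp
  qed
  then have "equidistributed m (2*m) (\<lambda>k. (k div 2 + ?y k) mod m) 2
      \<longleftrightarrow> equidistributed m (2*m) (\<lambda>k. k mod m) 2"
    by (rule equidistributed_cong)
  with equidistributed_mod have "equidistributed m (2*m) (\<lambda>k. (k div 2 + ?y k) mod m) 2"
    by blast
  from friendship_Zm_cordial_append_triangles[OF assms equidistributed_div_2 y this]
  show ?thesis .
qed

lemma edge_label_image_subset: "0 < m \<Longrightarrow> edge_label m l ` E \<subseteq> {..<m}"
  by (auto simp: edge_label_def)

lemma sum_ecount_eq_card:
  assumes "0 < m" "finite E"
  shows "(\<Sum>a<m. ecount m E l a) = card E"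
  using sum.group[OF assms(2) finite_lessThan edge_label_image_subset[OF assms(1), where l=l],
      where h="\<lambda>_. 1::nat"]
  by (simp add: ecount_def)

lemma sum_edge_label_eq:
  assumes "0 < m" "finite E"
  shows "(\<Sum>e\<in>E. edge_label m l e) = (\<Sum>a<m. a * ecount m E l a)"
  using sum.group[OF assms(2) finite_lessThan edge_label_image_subset[OF assms(1), where l=l],
      where h="edge_label m l"]
  by (simp add: ecount_def mult.commute)

lemma even_sum_edge_label_friendship:
  assumes "even m"
  shows "even (\<Sum>e\<in>friendship_E n. edge_label m l e)"
proof (induction n)
  case 0
  then show ?case
    by (simp add: friendship_E_0)
next
  case (Suc n)
  have parity: "even (u mod m) \<longleftrightarrow> even u" for u
    using assms by (metis dvd_mod_iff)
  have "even (edge_label m l {0, 2*n+1} + edge_label m l {0, 2*n+2} + edge_label m l {2*n+1, 2*n+2})"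
    by (simp add: edge_label_def parity) blast
  with Suc show ?case
    by (simp add: sum_friendship_E_Suc)
qed

lemma balanced_eq_average:
  fixes c :: "nat \<Rightarrow> nat"
  assumes balanced: "\<forall>a1<m. \<forall>a2<m. \<bar>int (c a1) - int (c a2)\<bar> \<le> 1"
    and total: "(\<Sum>a<m. c a) = q * m" and "a < m"
  shows "c a = q"
proof (rule ccontr)
  assume "c a \<noteq> q"
  then consider "c a < q" | "c a > q"
    by linarith
  then show False
  proof cases
    case 1
    with balanced \<open>a < m\<close> have "\<forall>b\<in>{..<m}. c b \<le> q"
      by force
    with 1 \<open>a < m\<close> have "(\<Sum>b<m. c b) < (\<Sum>b<m. q)"
      by (intro sum_strict_mono_ex1) auto
    with total show False
      by simp
  next
    case 2
    with balanced \<open>a < m\<close> have "\<forall>b\<in>{..<m}. q \<le> c b"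
      by force
    with 2 \<open>a < m\<close> have "(\<Sum>b<m. q) < (\<Sum>b<m. c b)"
      by (intro sum_strict_mono_ex1) auto
    with total show False
      by simp
  qed
qed

lemma odd_sum_lessThan:
  fixes m :: nat
  assumes "even m" "\<not> 4 dvd m"
  shows "odd (\<Sum>a<m. a)"
proof -
  obtain q where q: "m = 2*q"
    using assms(1) by blast
  with assms(2) have "odd q"
    by auto
  then obtain j where "q = 2*j + 1"
    by (rule oddE)
  with q have j: "m = 4*j + 2"
    by simp
  have "(\<Sum>a<m. a) = m * (m - 1) div 2"
    using Sum_Ico_nat[of 0 m] by (simp add: atLeast0LessThan)
  also have "m * (m - 1) = 2 * ((2*j + 1) * (4*j + 1))"
    unfolding j by (simp add: algebra_simps)
  finally show ?thesis
    by simp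
qed

lemma friendship_not_Zm_cordial:
  assumes "even m" "\<not> 4 dvd m"
  shows "\<not> friendship_Zm_cordial m m"
proof
  assume "friendship_Zm_cordial m m"
  then obtain l where l: "Zm_cordial_labeling m (friendship_V m) (friendship_E m) l"
    by (auto simp: friendship_Zm_cordial_def Zm_cordial_def)
  from assms have "0 < m"
    by (intro gr0I) simp
  have "(\<Sum>a<m. ecount m (friendship_E m) l a) = 3 * m"
    using sum_ecount_eq_card[OF \<open>0 < m\<close> finite_friendship_E] by (simp add: card_friendship_E)
  then have "ecount m (friendship_E m) l a = 3" if "a < m" for a
    using balanced_eq_average[of m _ 3] l that by (simp add: Zm_cordial_labeling_def)
  then have "(\<Sum>e\<in>friendship_E m. edge_label m l e) = 3 * (\<Sum>a<m. a)"
    by (simp add: sum_edge_label_eq[OF \<open>0 < m\<close> finite_friendship_E] sum_distrib_left mult.commute)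
  with odd_sum_lessThan[OF assms] even_sum_edge_label_friendship[OF assms(1), where l=l and n=m]
  show False
    by simp
qed

lemma nat_induct_period:
  fixes n p :: nat
  assumes "0 < p" "P 0" "\<forall>n\<in>{1..p-1}. P n" "\<And>n. P n \<Longrightarrow> P (n + p)"
  shows "P n"
proof (induction n rule: less_induct)
  case (less n)
  show ?case
  proof (cases "n < p")
    case True
    with assms(2,3) show ?thesis
      by (cases "n = 0") auto
  next
    case False
    with less assms(1) have "P (n - p)"
      by simp
    from assms(4)[OF this] False show ?thesis
      by simp
  qed
qed

theorem theorem8p3:
  fixes m :: nat
  assumes "m \<ge> 1"
  shows "(odd m \<longrightarrow> friendship_Zm_cordial m m \<and>
            ((\<forall>n. friendship_Zm_cordial m n) \<longleftrightarrow> (\<forall>n\<in>{1..m-1}. friendship_Zm_cordial m n)))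
       \<and> (even m \<longrightarrow> friendship_Zm_cordial m (2*m) \<and>
            ((\<forall>n. friendship_Zm_cordial m n) \<longleftrightarrow> (\<forall>n\<in>{1..2*m-1}. friendship_Zm_cordial m n)))
       \<and> (even m \<and> \<not> 4 dvd m \<longrightarrow> \<not> friendship_Zm_cordial m m)"
proof (intro conjI impI)
  have F0: "friendship_Zm_cordial m 0"
    using assms by (rule friendship_Zm_cordial_0)
  show "friendship_Zm_cordial m m" if "odd m"
    using friendship_Zm_cordial_add_odd[OF that F0] by simp
  show "friendship_Zm_cordial m (2*m)"
    using friendship_Zm_cordial_add_double[OF F0] by simp
  show "(\<forall>n. friendship_Zm_cordial m n) \<longleftrightarrow> (\<forall>n\<in>{1..m-1}. friendship_Zm_cordial m n)"
    if "odd m"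
    using nat_induct_period[of m "friendship_Zm_cordial m"] assms F0
      friendship_Zm_cordial_add_odd[OF that] by auto
  show "(\<forall>n. friendship_Zm_cordial m n) \<longleftrightarrow> (\<forall>n\<in>{1..2*m-1}. friendship_Zm_cordial m n)"
    using nat_induct_period[of "2*m" "friendship_Zm_cordial m"] assms F0
      friendship_Zm_cordial_add_double by auto
  show "\<not> friendship_Zm_cordial m m" if "even m \<and> \<not> 4 dvd m"
    using that friendship_not_Zm_cordial by blast
qed

end
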